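(* Let $p$ be an odd prime and $\lambda$ a nonempty self-conjugate partition. If $a^*_\lambda$ is even, then $p\mid a^*_\lambda$.
   Context: Partitions: $\lambda=(\lambda_1\ge\lambda_2\ge\cdots)$ with finitely many nonzero parts; $l(\lambda)$ = number of nonzero parts; Young diagram $[\lambda]=\{(i,j): i\ge1, 1\le j\le\lambda_i\}$ ($i$ = row, increasing downward); self-conjugate means $(i,j)\in[\lambda]\iff(j,i)\in[\lambda]$. Rim and $p$-rim: the rim is the set of nodes $(i,j)\in[\lambda]$ with $(i+1,j+1)\notin[\lambda]$. Label rim nodes $1,2,\dots$ along the rim path from $(1,\lambda_1)$ to $(l(\lambda),1)$ (top-right to bottom-left). The first $p$-segment is the rim nodes labelled $1,\dots,p$ (or all if fewer). If the last node $(i,j)$ of a $p$-segment lies in the last row, stop; otherwise with $l$ the smallest label in row $i+1$ the next $p$-segment is the rim nodes labelled $l,\dots,l+p-1$ (or up to the last). The $p$-rim is the union of the $p$-segments. $p$-rim*: $U_\lambda=\{(i,j)\in p\text{-rim of }\lambda: i\le j\}$, $L_\lambda=\{(j,i):(i,j)\in U_\lambda\}$, $\mathrm{Rim}^*_p(\lambda)=U_\lambda\cup L_\lambda$, and $a^*_\lambda=\#\mathrm{Rim}^*_p(\lambda)$. *)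

theory Defs
  imports "HOL-Computational_Algebra.Primes"
begin

text \<open>A partition is a weakly decreasing list of positive naturals (its nonzero parts).
  Parts are indexed from 1: lambda_i = lam ! (i - 1); l(lambda) = length lam.\<close>

definition is_partition :: "nat list \<Rightarrow> bool" where
  "is_partition lam \<longleftrightarrow> sorted_wrt (\<ge>) lam \<and> 0 \<notin> set lam"

definition young :: "nat list \<Rightarrow> (nat \<times> nat) set" where
  "young lam = {(i, j). 1 \<le> i \<and> i \<le> length lam \<and> 1 \<le> j \<and> j \<le> lam ! (i - 1)}"

definition self_conjugate :: "nat list \<Rightarrow> bool" where
  "self_conjugate lam \<longleftrightarrow> (\<forall>i j. (i, j) \<in> young lam \<longleftrightarrow> (j, i) \<in> young lam)"

definition rim :: "nat list \<Rightarrow> (nat \<times> nat) set" where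
  "rim lam = {(i, j) \<in> young lam. (i + 1, j + 1) \<notin> young lam}"

text \<open>Label of a rim node along the rim path from (1, lambda_1) to (l, 1):
  rows increase, and within a row columns decrease; labels start at 1.\<close>

definition rim_label :: "nat list \<Rightarrow> nat \<times> nat \<Rightarrow> nat" where
  "rim_label lam x = card {y \<in> rim lam. fst y < fst x \<or> (fst y = fst x \<and> snd x \<le> snd y)}"

inductive_set seg_start :: "nat \<Rightarrow> nat list \<Rightarrow> nat set" for p lam where
  first: "1 \<in> seg_start p lam"
| step: "\<lbrakk> s \<in> seg_start p lam; x \<in> rim lam;
           rim_label lam x = min (s + p - 1) (card (rim lam));
           fst x < length lam \<rbrakk>
         \<Longrightarrow> Min (rim_label lam ` {z \<in> rim lam. fst z = fst x + 1}) \<in> seg_start p lam"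

definition p_rim :: "nat \<Rightarrow> nat list \<Rightarrow> (nat \<times> nat) set" where
  "p_rim p lam = {x \<in> rim lam. \<exists>s \<in> seg_start p lam.
                    s \<le> rim_label lam x \<and> rim_label lam x \<le> s + p - 1}"

definition rim_star_U :: "nat \<Rightarrow> nat list \<Rightarrow> (nat \<times> nat) set" where
  "rim_star_U p lam = {(i, j) \<in> p_rim p lam. i \<le> j}"

definition rim_star :: "nat \<Rightarrow> nat list \<Rightarrow> (nat \<times> nat) set" where
  "rim_star p lam = rim_star_U p lam \<union> (\<lambda>(i, j). (j, i)) ` rim_star_U p lam"

definition a_star :: "nat \<Rightarrow> nat list \<Rightarrow> nat" where
  "a_star p lam = card (rim_star p lam)"

end

theory Submission imports Defs begin

text \<open>The rim crosses the diagonal exactly once, at the corner \<open>(d, d)\<close> of the Durfee square,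
  and rim labels increase along the rim path, so the p-rim nodes strictly above the diagonal are
  exactly those whose label is smaller than that of \<open>(d, d)\<close>. As \<open>Rim\<^sup>*\<^sub>p(\<lambda>)\<close> consists of these
  nodes, their mirror images and possibly \<open>(d, d)\<close>, \<open>a\<^sup>*\<^sub>\<lambda>\<close> is even exactly when \<open>(d, d)\<close> is
  not in the p-rim. Then no p-segment starting before \<open>(d, d)\<close> can reach it, so each of them is
  a full block of p consecutive labels, and distinct segments are disjoint. Hence
  \<open>a\<^sup>*\<^sub>\<lambda> = 2p\<close> times the number of segments starting before \<open>(d, d)\<close>.\<close>

lemma finite_young: "finite (young lam)"
proof -
  have "young lam \<subseteq> {..length lam} \<times> {..sum_list lam}"
    by (auto simp: young_def intro: order_trans[OF _ elem_le_sum_list])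
  then show ?thesis
    by (rule finite_subset) auto
qed

lemma finite_rim: "finite (rim lam)"
  using finite_young by (rule finite_subset[rotated]) (auto simp: rim_def)

lemma young_downward_closed:
  assumes "is_partition lam" "(i, j) \<in> young lam" "1 \<le> i'" "i' \<le> i" "1 \<le> j'" "j' \<le> j"
  shows "(i', j') \<in> young lam"
proof -
  have "lam ! (i - 1) \<le> lam ! (i' - 1)"
    using assms unfolding is_partition_def sorted_wrt_iff_nth_less young_def
    by (cases "i' = i") auto
  then show ?thesis
    using assms by (auto simp: young_def)
qed

definition rim_precedes :: "nat \<times> nat \<Rightarrow> nat \<times> nat \<Rightarrow> bool" where
  "rim_precedes x y \<longleftrightarrow> fst x < fst y \<or> (fst x = fst y \<and> snd y < snd x)"

lemma rim_label_strict_mono: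
  assumes "x \<in> rim lam" "y \<in> rim lam" "rim_precedes x y"
  shows "rim_label lam x < rim_label lam y"
  unfolding rim_label_def
proof (rule psubset_card_mono)
  show "finite {z \<in> rim lam. fst z < fst y \<or> fst z = fst y \<and> snd y \<le> snd z}"
    using finite_rim by auto
  show "{z \<in> rim lam. fst z < fst x \<or> fst z = fst x \<and> snd x \<le> snd z}
      \<subset> {z \<in> rim lam. fst z < fst y \<or> fst z = fst y \<and> snd y \<le> snd z}"
    using assms unfolding rim_precedes_def by auto
qed

lemma inj_on_rim_label: "inj_on (rim_label lam) (rim lam)"
proof (rule inj_onI, rule ccontr)
  fix x y
  assume xy: "x \<in> rim lam" "y \<in> rim lam" "rim_label lam x = rim_label lam y" and "x \<noteq> y"
  then have "rim_precedes x y \<or> rim_precedes y x"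
    by (auto simp: rim_precedes_def prod_eq_iff)
  then show False
    using rim_label_strict_mono[of x lam y] rim_label_strict_mono[of y lam x] xy by auto
qed

lemma rim_label_image: "rim_label lam ` rim lam = {1..card (rim lam)}"
proof (rule card_subset_eq)
  have "x \<in> rim lam \<Longrightarrow> 1 \<le> rim_label lam x" for x
    unfolding rim_label_def One_nat_def Suc_le_eq card_gt_0_iff
    using finite_rim[of lam] by (cases x) auto
  moreover have "rim_label lam x \<le> card (rim lam)" for x
    unfolding rim_label_def using finite_rim by (intro card_mono) auto
  ultimately show "rim_label lam ` rim lam \<subseteq> {1..card (rim lam)}"
    by auto
  show "card (rim_label lam ` rim lam) = card {1..card (rim lam)}"
    using card_image[OF inj_on_rim_label] by simp
qed simp

lemma rim_label_bounds:
  "x \<in> rim lam \<Longrightarrow> 1 \<le> rim_label lam x \<and> rim_label lam x \<le> card (rim lam)"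
  using rim_label_image[of lam] by auto

lemma row_end_in_rim:
  assumes "is_partition lam" "1 \<le> i" "i \<le> length lam"
  shows "(i, lam ! (i - 1)) \<in> rim lam"
proof -
  have "lam ! (i - 1) \<noteq> 0"
    using assms nth_mem unfolding is_partition_def by (metis diff_less less_le_trans zero_less_one)
  moreover have "i < length lam \<Longrightarrow> lam ! i \<le> lam ! (i - 1)"
    using assms unfolding is_partition_def sorted_wrt_iff_nth_less by auto
  ultimately show ?thesis
    using assms by (auto simp: rim_def young_def)
qed

text \<open>The rule \<open>seg_start.step\<close> as a function of \<open>s\<close>, recovering the last node of the
  segment from its label by \<open>inv_into\<close>. The maximum with \<open>s + p\<close> is inactive on genuine
  segment starts (\<open>seg_next_eq\<close>) and makes every step advance by \<open>p\<close>.\<close>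

definition seg_next :: "nat \<Rightarrow> nat list \<Rightarrow> nat \<Rightarrow> nat" where
  "seg_next p lam s =
     (let x = inv_into (rim lam) (rim_label lam) (min (s + p - 1) (card (rim lam)))
      in max (s + p) (Min (rim_label lam ` {z \<in> rim lam. fst z = fst x + 1})))"

lemma seg_next_eq:
  assumes "is_partition lam" "x \<in> rim lam" "fst x < length lam"
    and "rim_label lam x = min (s + p - 1) (card (rim lam))"
  shows "seg_next p lam s = Min (rim_label lam ` {z \<in> rim lam. fst z = fst x + 1})"
proof -
  let ?L = "rim_label lam ` {z \<in> rim lam. fst z = fst x + 1}"
  have "Min ?L \<in> ?L"
    using row_end_in_rim[OF assms(1), of "fst x + 1"] assms(3) finite_rim by (intro Min_in) auto
  then obtain z where z: "z \<in> rim lam" "fst z = fst x + 1" "Min ?L = rim_label lam z"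
    by auto
  have "rim_label lam x < rim_label lam z"
    using rim_label_strict_mono[OF assms(2) z(1)] z(2) by (simp add: rim_precedes_def)
  then have "s + p \<le> Min ?L"
    using z(3) assms(4) rim_label_bounds[OF z(1)] by linarith
  moreover have "inv_into (rim lam) (rim_label lam) (rim_label lam x) = x"
    by (rule inv_into_f_f[OF inj_on_rim_label assms(2)])
  ultimately show ?thesis
    using assms(4) by (simp add: seg_next_def Let_def)
qed

lemma le_seg_next: "s + p \<le> seg_next p lam s"
  by (simp add: seg_next_def Let_def)

lemma seg_start_iterates:
  assumes "is_partition lam" "s \<in> seg_start p lam"
  shows "\<exists>n. s = (seg_next p lam ^^ n) 1"
  using assms(2)
proof induction
  case first
  show ?case
    by (rule exI[of _ 0]) simp
next
  case (step s x)
  then obtain n where "s = (seg_next p lam ^^ n) 1"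
    by blast
  then show ?case
    using seg_next_eq[OF assms(1) step.hyps(2,4,3)] by (intro exI[of _ "Suc n"]) simp
qed

lemma funpow_increment_le:
  fixes f :: "nat \<Rightarrow> nat"
  assumes "\<And>x. x + p \<le> f x" "m < n"
  shows "(f ^^ m) x + p \<le> (f ^^ n) x"
  using assms(2)
proof (induction n)
  case (Suc n)
  have "(f ^^ m) x \<le> (f ^^ n) x"
    using Suc by (cases "m = n") auto
  then show ?case
    using assms(1)[of "(f ^^ n) x"] by simp
qed simp

lemma seg_start_separated:
  assumes "is_partition lam" "a \<in> seg_start p lam" "b \<in> seg_start p lam" "a < b"
  shows "a + p \<le> b"
proof -
  obtain m n where mn: "a = (seg_next p lam ^^ m) 1" "b = (seg_next p lam ^^ n) 1"
    using seg_start_iterates assms(1-3) by metis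
  have "m < n"
    using funpow_increment_le[where f = "seg_next p lam" and m = n and n = m and x = 1, OF le_seg_next]
      mn assms(4) by (cases m n rule: linorder_cases) auto
  then show ?thesis
    using funpow_increment_le[where f = "seg_next p lam", OF le_seg_next] mn by blast
qed

lemma seg_start_pos:
  assumes "is_partition lam" "s \<in> seg_start p lam"
  shows "1 \<le> s"
proof -
  obtain n where "s = (seg_next p lam ^^ n) 1"
    using seg_start_iterates[OF assms] by blast
  then show ?thesis
    using funpow_increment_le[where f = "seg_next p lam" and m = 0 and n = n and x = 1, OF le_seg_next]
    by (cases n) auto
qed

lemma rim_label_p_rim:
  "rim_label lam ` p_rim p lam =
     {k \<in> {1..card (rim lam)}. \<exists>s \<in> seg_start p lam. s \<le> k \<and> k \<le> s + p - 1}"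
  unfolding p_rim_def rim_label_image[symmetric] by blast

lemma card_UN_separated_intervals:
  fixes I :: "nat set"
  assumes "finite I" "\<And>a b. a \<in> I \<Longrightarrow> b \<in> I \<Longrightarrow> a < b \<Longrightarrow> a + p \<le> b"
  shows "card (\<Union>s \<in> I. {s..<s + p}) = p * card I"
proof -
  have "card (\<Union>s \<in> I. {s..<s + p}) = (\<Sum>s \<in> I. card {s..<s + p})"
  proof (rule card_UN_disjoint[OF assms(1)])
    show "\<forall>a \<in> I. \<forall>b \<in> I. a \<noteq> b \<longrightarrow> {a..<a + p} \<inter> {b..<b + p} = {}"
      using assms(2) by (metis disjoint_iff atLeastLessThan_iff le_trans linorder_neqE_nat not_le)
  qed simp
  then show ?thesis
    by simp
qed

definition durfee_size :: "nat list \<Rightarrow> nat" where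
  "durfee_size lam = Max {i. (i, i) \<in> young lam}"

lemma finite_young_diagonal: "finite {i. (i, i) \<in> young lam}"
  by (rule finite_subset[of _ "{..length lam}"]) (auto simp: young_def)

lemma le_durfee_size: "(i, i) \<in> young lam \<Longrightarrow> i \<le> durfee_size lam"
  unfolding durfee_size_def using finite_young_diagonal by (rule Max_ge) simp

lemma durfee_corner_in_young:
  assumes "is_partition lam" "lam \<noteq> []"
  shows "(durfee_size lam, durfee_size lam) \<in> young lam"
proof -
  have "lam ! 0 \<noteq> 0"
    using assms unfolding is_partition_def by (metis length_greater_0_conv nth_mem)
  then have "(1, 1) \<in> young lam"
    using assms(2) by (auto simp: young_def Suc_le_eq)
  then show ?thesis
    unfolding durfee_size_def using Max_in[OF finite_young_diagonal] by auto
qed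

lemma durfee_corner_in_rim:
  assumes "is_partition lam" "lam \<noteq> []"
  shows "(durfee_size lam, durfee_size lam) \<in> rim lam"
  using durfee_corner_in_young[OF assms] by (auto simp: rim_def dest: le_durfee_size)

lemma rim_diagonal_eq_durfee_corner:
  assumes "is_partition lam" "lam \<noteq> []" "(i, i) \<in> rim lam"
  shows "i = durfee_size lam"
proof -
  have i: "(i, i) \<in> young lam" "(i + 1, i + 1) \<notin> young lam"
    using assms(3) by (auto simp: rim_def)
  have "i \<le> durfee_size lam"
    using le_durfee_size[OF i(1)] .
  moreover have "\<not> i < durfee_size lam"
    using young_downward_closed[OF assms(1) durfee_corner_in_young[OF assms(1,2)], of "i + 1" "i + 1"] i(2)
    by auto
  ultimately show ?thesis
    by simp
qed

lemma rim_label_less_durfee_corner_iff: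
  assumes "is_partition lam" "lam \<noteq> []" "x \<in> rim lam"
  shows "rim_label lam x < rim_label lam (durfee_size lam, durfee_size lam) \<longleftrightarrow> fst x < snd x"
proof -
  obtain i j where x: "x = (i, j)"
    by fastforce
  let ?d = "durfee_size lam"
  have c: "(?d, ?d) \<in> rim lam"
    by (rule durfee_corner_in_rim[OF assms(1,2)])
  have ij: "(i, j) \<in> young lam" "(i + 1, j + 1) \<notin> young lam" "1 \<le> i"
    using assms(3) x by (auto simp: rim_def young_def)
  consider "i < j" | "i = j" | "j < i"
    by linarith
  then show ?thesis
  proof cases
    case 1
    have "(i, i) \<in> young lam"
      using young_downward_closed[OF assms(1) ij(1), of i i] ij(3) 1 by simp
    then have "i \<le> ?d"
      by (rule le_durfee_size)
    then have "rim_precedes x (?d, ?d)"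
      using 1 x by (auto simp: rim_precedes_def)
    then show ?thesis
      using rim_label_strict_mono[OF assms(3) c] 1 x by simp
  next
    case 2
    then show ?thesis
      using rim_diagonal_eq_durfee_corner[OF assms(1,2)] assms(3) x by simp
  next
    case 3
    have "\<not> i < ?d"
      using young_downward_closed[OF assms(1) durfee_corner_in_young[OF assms(1,2)], of "i + 1" "j + 1"]
        ij(2) 3 by auto
    then have "rim_precedes (?d, ?d) x"
      using 3 x by (auto simp: rim_precedes_def)
    then show ?thesis
      using rim_label_strict_mono[OF c assms(3)] 3 x by simp
  qed
qed

definition p_rim_above :: "nat \<Rightarrow> nat list \<Rightarrow> (nat \<times> nat) set" where
  "p_rim_above p lam = {x \<in> p_rim p lam. fst x < snd x}"

lemma a_star_eq:
  assumes "is_partition lam" "lam \<noteq> []"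
  shows "a_star p lam = 2 * card (p_rim_above p lam) +
           (if (durfee_size lam, durfee_size lam) \<in> p_rim p lam then 1 else 0)"
proof -
  let ?c = "(durfee_size lam, durfee_size lam)" and ?W = "p_rim_above p lam"
  define swap :: "nat \<times> nat \<Rightarrow> nat \<times> nat" where "swap = (\<lambda>(i, j). (j, i))"
  have finW: "finite ?W"
    using finite_rim by (rule finite_subset[rotated]) (auto simp: p_rim_above_def p_rim_def)
  have "x = ?c" if "x \<in> p_rim p lam" "fst x = snd x" for x
    using rim_diagonal_eq_durfee_corner[OF assms, of "fst x"] that
    by (cases x) (auto simp: p_rim_def)
  then have "rim_star_U p lam = ?W \<union> (p_rim p lam \<inter> {?c})"
    unfolding rim_star_U_def p_rim_above_def by (auto simp: le_less)
  then have rim_star: "rim_star p lam = (?W \<union> swap ` ?W) \<union> (p_rim p lam \<inter> {?c})"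
    unfolding rim_star_def swap_def by auto
  have "?W \<inter> swap ` ?W = {}" "inj_on swap ?W"
    by (auto simp: swap_def p_rim_above_def inj_on_def)
  then have "card (?W \<union> swap ` ?W) = 2 * card ?W"
    using card_Un_disjoint[OF finW finite_imageI[OF finW]] card_image by simp
  moreover have "?c \<notin> ?W \<union> swap ` ?W"
    by (auto simp: swap_def p_rim_above_def)
  ultimately show ?thesis
    unfolding a_star_def rim_star using finW by auto
qed

lemma rim_label_p_rim_above:
  assumes "is_partition lam" "lam \<noteq> []" "0 < p"
    and "(durfee_size lam, durfee_size lam) \<notin> p_rim p lam"
  defines "\<delta> \<equiv> rim_label lam (durfee_size lam, durfee_size lam)"
  shows "rim_label lam ` p_rim_above p lam =
           (\<Union>s \<in> {s \<in> seg_start p lam. s < \<delta>}. {s..<s + p})"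
proof -
  let ?c = "(durfee_size lam, durfee_size lam)" and ?S = "seg_start p lam"
  have c_rim: "?c \<in> rim lam"
    by (rule durfee_corner_in_rim[OF assms(1,2)])
  have not_reached: "s + p - 1 < \<delta>" if "s \<in> ?S" "s < \<delta>" for s
  proof -
    have "\<not> (s \<le> \<delta> \<and> \<delta> \<le> s + p - 1)"
      using assms(4) c_rim that(1) unfolding p_rim_def \<delta>_def by blast
    then show ?thesis
      using that(2) by linarith
  qed
  have "rim_label lam ` p_rim_above p lam = {k \<in> rim_label lam ` p_rim p lam. k < \<delta>}"
    using rim_label_less_durfee_corner_iff[OF assms(1,2)] unfolding p_rim_above_def p_rim_def \<delta>_def
    by auto
  also have "\<dots> = (\<Union>s \<in> {s \<in> ?S. s < \<delta>}. {s..<s + p})"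
  proof (intro equalityI subsetI)
    fix k
    assume "k \<in> {k \<in> rim_label lam ` p_rim p lam. k < \<delta>}"
    then obtain s where "s \<in> ?S" "s \<le> k" "k \<le> s + p - 1" "k < \<delta>"
      unfolding rim_label_p_rim by auto
    then show "k \<in> (\<Union>s \<in> {s \<in> ?S. s < \<delta>}. {s..<s + p})"
      using assms(3) by fastforce
  next
    fix k
    assume "k \<in> (\<Union>s \<in> {s \<in> ?S. s < \<delta>}. {s..<s + p})"
    then obtain s where s: "s \<in> ?S" "s < \<delta>" "s \<le> k" "k < s + p"
      by auto
    have "k < \<delta>"
      using not_reached[OF s(1,2)] s(4) by linarith
    moreover have "1 \<le> k"
      using seg_start_pos[OF assms(1) s(1)] s(3) by linarith
    moreover have "\<delta> \<le> card (rim lam)"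
      using rim_label_bounds[OF c_rim] unfolding \<delta>_def by simp
    ultimately show "k \<in> {k \<in> rim_label lam ` p_rim p lam. k < \<delta>}"
      unfolding rim_label_p_rim using s by auto
  qed
  finally show ?thesis .
qed

lemma card_p_rim_above:
  assumes "is_partition lam" "lam \<noteq> []" "0 < p"
    and "(durfee_size lam, durfee_size lam) \<notin> p_rim p lam"
  shows "card (p_rim_above p lam) =
           p * card {s \<in> seg_start p lam. s < rim_label lam (durfee_size lam, durfee_size lam)}"
proof -
  have "inj_on (rim_label lam) (p_rim_above p lam)"
    by (rule inj_on_subset[OF inj_on_rim_label]) (auto simp: p_rim_above_def p_rim_def)
  then have "card (p_rim_above p lam) = card (rim_label lam ` p_rim_above p lam)"
    by (simp add: card_image)
  also have "\<dots> = p * card {s \<in> seg_start p lam. s < rim_label lam (durfee_size lam, durfee_size lam)}"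
    unfolding rim_label_p_rim_above[OF assms]
    by (rule card_UN_separated_intervals) (auto intro: seg_start_separated[OF assms(1)])
  finally show ?thesis .
qed

theorem lemma3p10:
  fixes p :: nat and lam :: "nat list"
  assumes "prime p" and "odd p"
    and "is_partition lam" and "lam \<noteq> []" and "self_conjugate lam"
    and "even (a_star p lam)"
  shows "p dvd a_star p lam"
proof -
  let ?c = "(durfee_size lam, durfee_size lam)"
  have "?c \<notin> p_rim p lam"
    using a_star_eq[OF assms(3,4), of p] assms(6) by auto
  then have "a_star p lam = 2 * (p * card {s \<in> seg_start p lam. s < rim_label lam ?c})"
    using a_star_eq[OF assms(3,4), of p] card_p_rim_above[OF assms(3,4) prime_gt_0_nat[OF assms(1)]]
    by simp
  then show ?thesis
    by simp
qed

end
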